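(* Let $n\ge 2$, fix $\boldsymbol{\rho}^0\in\mathcal{P}_n$ and $\alpha>0$, and let $\mathbf{R}^1,\mathbf{R}^2,\dots$ be independent rankings, each distributed as $\mathrm{Mallows}(\boldsymbol{\rho}^0,\alpha)$ with the footrule distance. Then as $N\to\infty$, $$\mathrm{rank}\Big(\tfrac{1}{N}\sum_{j=1}^{N}R^j_1,\dots,\tfrac{1}{N}\sum_{j=1}^{N}R^j_n\Big)\to \mathrm{rank}\big(\mathbb{E}[R_1\mid\boldsymbol{\rho}^0,\alpha],\dots,\mathbb{E}[R_n\mid\boldsymbol{\rho}^0,\alpha]\big)=\boldsymbol{\rho}^0,$$ where $\mathbf{R}=(R_1,\dots,R_n)\sim\mathrm{Mallows}(\boldsymbol{\rho}^0,\alpha)$.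
   Context: $\mathcal{P}_n$ denotes the set of permutations of $\{1,\dots,n\}$; a ranking $\mathbf{r}\in\mathcal{P}_n$ assigns rank $r_i$ to item $i$. The footrule distance is $d(\mathbf{r},\boldsymbol{\rho})=\sum_{i=1}^n|r_i-\rho_i|$. The Mallows distribution $\mathrm{Mallows}(\boldsymbol{\rho}^0,\alpha)$ on $\mathcal{P}_n$ has probability mass function $P(\mathbf{R}=\mathbf{r}\mid\boldsymbol{\rho}^0,\alpha)=\frac{1}{Z_n(\alpha)}\exp\{-\frac{\alpha}{n}d(\mathbf{r},\boldsymbol{\rho}^0)\}$ with normalizing constant $Z_n(\alpha)$. The rank operator on a real vector $(x_1,\dots,x_n)$ is $\mathrm{rank}(x_1,\dots,x_n)=(r_1,\dots,r_n)$ with $r_i=\sum_{j=1}^n\delta(x_i-x_j)$, where $\delta(x)=1$ if $x\ge 0$ and $\delta(x)=0$ if $x<0$. *)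

theory Defs
  imports "HOL-Probability.Probability" "HOL-Combinatorics.Permutations"
begin

text \<open>Rankings of n items: functions r :: nat => nat with r permutes {1..n};
  r i is the rank of item i (and r i = i outside {1..n}).\<close>

definition rankings :: "nat \<Rightarrow> (nat \<Rightarrow> nat) set" where
  "rankings n = {r. r permutes {1..n}}"

definition footrule :: "nat \<Rightarrow> (nat \<Rightarrow> nat) \<Rightarrow> (nat \<Rightarrow> nat) \<Rightarrow> real" where
  "footrule n r \<rho> = (\<Sum>i=1..n. \<bar>real (r i) - real (\<rho> i)\<bar>)"

definition mallows_Z :: "nat \<Rightarrow> (nat \<Rightarrow> nat) \<Rightarrow> real \<Rightarrow> real" where
  "mallows_Z n \<rho>0 \<alpha> = (\<Sum>r\<in>rankings n. exp (- (\<alpha> / real n) * footrule n r \<rho>0))"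

definition mallows :: "nat \<Rightarrow> (nat \<Rightarrow> nat) \<Rightarrow> real \<Rightarrow> (nat \<Rightarrow> nat) pmf" where
  "mallows n \<rho>0 \<alpha> = embed_pmf (\<lambda>r. if r \<in> rankings n
      then exp (- (\<alpha> / real n) * footrule n r \<rho>0) / mallows_Z n \<rho>0 \<alpha> else 0)"

definition rank_vec :: "nat \<Rightarrow> (nat \<Rightarrow> real) \<Rightarrow> nat \<Rightarrow> nat" where
  "rank_vec n x i = card {j\<in>{1..n}. x i - x j \<ge> 0}"

end

theory Submission
  imports Defs "HOL-Probability.Hoeffding"
begin

text \<open>
  Pairing each ranking \<open>r\<close> with \<open>r \<circ> (a b)\<close> shows that, if \<open>\<rho>0 a < \<rho>0 b\<close>, the partner
  that ranks \<open>a\<close> and \<open>b\<close> in the order of \<open>\<rho>0\<close> never has larger footrule distance to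
  \<open>\<rho>0\<close>, hence never smaller Mallows weight; so \<open>E[R\<^sub>a] < E[R\<^sub>b]\<close>, the expected ranks are
  distinct and ordered like \<open>\<rho>0\<close>, and their rank vector is \<open>\<rho>0\<close>. The rank vector is locally
  constant at vectors with distinct entries, so it remains to show that the sample means converge
  almost surely to the expectations: a strong law for bounded i.i.d. variables, obtained from
  Hoeffding's inequality and the Borel-Cantelli lemma.
\<close>

context prob_space
begin

lemma AE_eventually_sample_mean_close:
  fixes X :: "nat \<Rightarrow> 'a \<Rightarrow> real"
  assumes indep: "indep_vars (\<lambda>_. borel) X UNIV"
    and distr_eq: "\<And>j. distr M borel (X j) = distr M borel (X 0)"
    and bounded: "AE x in M. X 0 x \<in> {a..b}" and "a < b" and "\<delta> > 0"
  shows "AE \<omega> in M. eventually (\<lambda>N. \<bar>(\<Sum>j=1..N. X j \<omega>) / real N - expectation (X 0)\<bar> < \<delta>)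
    sequentially"
proof -
  have [measurable]: "\<And>j. random_variable borel (X j)"
    using indep unfolding indep_vars_def by blast
  define A where "A N = {x\<in>space M. \<bar>(\<Sum>j=1..N. X j x) / real N - expectation (X 0)\<bar> \<ge> \<delta>}"
    for N
  have A_sets: "A N \<in> sets M" for N
    unfolding A_def by measurable
  define c where "c = exp (-2 * \<delta>\<^sup>2 / (b - a)\<^sup>2)"
  have c: "0 < c" "c < 1"
    using \<open>a < b\<close> \<open>\<delta> > 0\<close> unfolding c_def by auto
  have prob_A: "prob (A N) \<le> 2 * c ^ N" if "N \<ge> 1" for N
  proof -
    have "Hoeffding_ineq_iid M {1..N} X (X 0) a b"
    proof unfold_locales
      show "indep_vars (\<lambda>_. borel) X {1..N}"
        by (rule indep_vars_subset[OF indep]) auto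
    qed (use bounded distr_eq in auto)
    then have "prob (A N) \<le> 2 * exp (-2 * real N * \<delta>\<^sup>2 / (b - a)\<^sup>2)"
      using Hoeffding_ineq_iid.Hoeffding_ineq_abs_ge'[of M "{1..N}" X "X 0" a b \<delta>]
        \<open>a < b\<close> \<open>\<delta> > 0\<close> that
      unfolding A_def by simp
    also have "exp (-2 * real N * \<delta>\<^sup>2 / (b - a)\<^sup>2) = c ^ N"
      unfolding c_def by (subst exp_of_nat_mult[symmetric]) (simp add: field_simps)
    finally show ?thesis .
  qed
  have "summable (\<lambda>N. prob (A N))"
  proof (rule summable_comparison_test')
    show "summable (\<lambda>N. 2 * c ^ N)"
      using c by (intro summable_mult summable_geometric) auto
  qed (use prob_A in simp)
  then have "AE x in M. eventually (\<lambda>N. x \<in> space M - A N) sequentially"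
    by (intro borel_cantelli_AE1 A_sets) (auto simp: emeasure_eq_measure)
  then show ?thesis
    by (rule eventually_mono) (auto simp: A_def elim: eventually_mono)
qed

theorem strong_law_bounded_iid:
  fixes X :: "nat \<Rightarrow> 'a \<Rightarrow> real"
  assumes "indep_vars (\<lambda>_. borel) X UNIV"
    and "\<And>j. distr M borel (X j) = distr M borel (X 0)"
    and "AE x in M. X 0 x \<in> {a..b}" and "a < b"
  shows "AE \<omega> in M. (\<lambda>N. (\<Sum>j=1..N. X j \<omega>) / real N) \<longlonglongrightarrow> expectation (X 0)"
proof -
  have "AE \<omega> in M. \<forall>m. eventually (\<lambda>N.
      \<bar>(\<Sum>j=1..N. X j \<omega>) / real N - expectation (X 0)\<bar> < 1 / Suc m) sequentially"
    using AE_eventually_sample_mean_close[OF assms] by (simp add: AE_all_countable)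
  then show ?thesis
  proof (rule eventually_mono)
    fix \<omega>
    assume close: "\<forall>m. eventually (\<lambda>N.
      \<bar>(\<Sum>j=1..N. X j \<omega>) / real N - expectation (X 0)\<bar> < 1 / Suc m) sequentially"
    show "(\<lambda>N. (\<Sum>j=1..N. X j \<omega>) / real N) \<longlonglongrightarrow> expectation (X 0)"
    proof (rule tendstoI)
      fix \<epsilon> :: real
      assume "\<epsilon> > 0"
      then obtain m where "1 / Suc m < \<epsilon>"
        using nat_approx_posE by blast
      with close show "eventually (\<lambda>N.
          dist ((\<Sum>j=1..N. X j \<omega>) / real N) (expectation (X 0)) < \<epsilon>) sequentially"
        by (auto simp: dist_real_def elim!: allE[of _ m] eventually_mono)
    qed
  qed
qed

lemma AE_sample_mean_tendsto_expectation_pmf: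
  fixes R :: "nat \<Rightarrow> 'a \<Rightarrow> 'b" and f :: "'b \<Rightarrow> real"
  assumes indep: "indep_vars (\<lambda>_. count_space UNIV) R UNIV"
    and distr_R: "\<And>j. distr M (count_space UNIV) (R j) = measure_pmf p"
    and bounded: "\<And>x. x \<in> set_pmf p \<Longrightarrow> f x \<in> {a..b}"
  shows "AE \<omega> in M. (\<lambda>N. (\<Sum>j=1..N. f (R j \<omega>)) / real N) \<longlonglongrightarrow> measure_pmf.expectation p f"
proof -
  have R_meas: "R j \<in> M \<rightarrow>\<^sub>M count_space UNIV" for j
    using indep unfolding indep_vars_def by blast
  have f_meas: "f \<in> count_space UNIV \<rightarrow>\<^sub>M borel"
    by simp
  have distr_fR: "distr M borel (\<lambda>\<omega>. f (R j \<omega>)) = distr (measure_pmf p) borel f" for j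
    using distr_distr[OF f_meas R_meas] by (simp add: distr_R comp_def)
  have "AE x in measure_pmf p. f x \<in> {a..b}"
    unfolding AE_measure_pmf_iff using bounded by blast
  then have "AE \<omega> in M. f (R 0 \<omega>) \<in> {a..b}"
    by (subst (asm) distr_R[of 0, symmetric]) (simp add: AE_distr_iff[OF R_meas])
  \<comment> \<open>Hoeffding's inequality needs a nondegenerate interval.\<close>
  moreover have "a < b + 1"
    using bounded[OF set_pmf_not_empty[THEN some_in_eq[THEN iffD2]]] by simp
  ultimately have "AE \<omega> in M. (\<lambda>N. (\<Sum>j=1..N. f (R j \<omega>)) / real N) \<longlonglongrightarrow> expectation (\<lambda>\<omega>. f (R 0 \<omega>))"
    by (intro strong_law_bounded_iid indep_vars_compose2[OF indep])
      (auto simp: distr_fR elim: eventually_mono)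
  moreover have "expectation (\<lambda>\<omega>. f (R 0 \<omega>)) = measure_pmf.expectation p f"
    by (simp add: integral_distr[OF R_meas f_meas, symmetric] distr_R)
  ultimately show ?thesis
    by simp
qed

end

lemma rank_vec_cong:
  assumes "\<And>j. j \<in> {1..n} \<Longrightarrow> x j \<le> x i \<longleftrightarrow> y j \<le> y i"
  shows "rank_vec n x i = rank_vec n y i"
  unfolding rank_vec_def using assms by (intro arg_cong[where f = card] Collect_cong) auto

lemma rank_vec_eq_permutation:
  fixes x :: "nat \<Rightarrow> real"
  assumes \<rho>: "\<rho> permutes {1..n}"
    and order: "\<And>a b. a \<in> {1..n} \<Longrightarrow> b \<in> {1..n} \<Longrightarrow> \<rho> a < \<rho> b \<Longrightarrow> x a < x b"
    and i: "i \<in> {1..n}"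
  shows "rank_vec n x i = \<rho> i"
proof -
  have inj: "inj_on \<rho> {1..n}"
    using permutes_inj_on[OF \<rho>] .
  have "x j \<le> x i \<longleftrightarrow> \<rho> j \<le> \<rho> i" if j: "j \<in> {1..n}" for j
  proof (cases "\<rho> j = \<rho> i")
    case True
    then show ?thesis
      using inj_onD[OF inj True j i] by simp
  next
    case False
    then show ?thesis
      using order[OF i j] order[OF j i] by (cases "\<rho> j < \<rho> i") auto
  qed
  then have "rank_vec n x i = rank_vec n (\<lambda>k. real (\<rho> k)) i"
    by (intro rank_vec_cong) simp
  also have "\<dots> = card (\<rho> ` {j\<in>{1..n}. \<rho> j \<le> \<rho> i})"
    unfolding rank_vec_def
    by (subst card_image) (auto intro: inj_on_subset[OF inj])
  also have "\<rho> ` {j\<in>{1..n}. \<rho> j \<le> \<rho> i} = {k\<in>\<rho> ` {1..n}. k \<le> \<rho> i}"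
    by blast
  also have "\<dots> = {1..\<rho> i}"
    using permutes_image[OF \<rho>] permutes_in_image[OF \<rho>, of i] i by auto
  finally show ?thesis
    by simp
qed

lemma eventually_rank_vec_eq:
  fixes x :: "nat \<Rightarrow> real" and y :: "'a \<Rightarrow> nat \<Rightarrow> real"
  assumes inj: "inj_on x {1..n}"
    and lim: "\<And>k. k \<in> {1..n} \<Longrightarrow> ((\<lambda>t. y t k) \<longlongrightarrow> x k) F"
  shows "eventually (\<lambda>t. \<forall>i\<in>{1..n}. rank_vec n (y t) i = rank_vec n x i) F"
proof -
  have "eventually (\<lambda>t. y t j \<le> y t i \<longleftrightarrow> x j \<le> x i) F"
    if i: "i \<in> {1..n}" and j: "j \<in> {1..n}" for i j
  proof (cases "i = j")
    case False
    then have "x i \<noteq> x j"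
      using inj_onD[OF inj _ i j] by blast
    have diff: "((\<lambda>t. y t i - y t j) \<longlongrightarrow> x i - x j) F"
      using lim[OF i] lim[OF j] by (rule tendsto_diff)
    show ?thesis
    proof (cases "x j < x i")
      case True
      then show ?thesis
        using order_tendstoD(1)[OF diff, of 0] by (auto elim: eventually_mono)
    next
      case False
      then show ?thesis
        using order_tendstoD(2)[OF diff, of 0] \<open>x i \<noteq> x j\<close> by (auto elim: eventually_mono)
    qed
  qed simp
  then have "eventually (\<lambda>t. \<forall>i\<in>{1..n}. \<forall>j\<in>{1..n}. y t j \<le> y t i \<longleftrightarrow> x j \<le> x i) F"
    by (simp add: eventually_ball_finite_distrib)
  then show ?thesis
    by (rule eventually_mono) (auto intro: rank_vec_cong)
qed

lemma sum_neg_by_involution: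
  fixes g :: "'a \<Rightarrow> real"
  assumes "finite S"
    and \<sigma>_in: "\<And>x. x \<in> S \<Longrightarrow> \<sigma> x \<in> S" and \<sigma>_\<sigma>: "\<And>x. x \<in> S \<Longrightarrow> \<sigma> (\<sigma> x) = x"
    and "\<And>x. x \<in> S \<Longrightarrow> g x + g (\<sigma> x) \<le> 0"
    and "x\<^sub>0 \<in> S" and "g x\<^sub>0 + g (\<sigma> x\<^sub>0) < 0"
  shows "sum g S < 0"
proof -
  have "sum g S = (\<Sum>x\<in>S. g (\<sigma> x))"
    by (rule sum.reindex_bij_witness[where i = \<sigma> and j = \<sigma>]) (auto simp: \<sigma>_in \<sigma>_\<sigma>)
  then have "2 * sum g S = (\<Sum>x\<in>S. g x + g (\<sigma> x))"
    by (simp add: sum.distrib)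
  also have "\<dots> < (\<Sum>x\<in>S. 0)"
    using assms by (intro sum_strict_mono_ex1) auto
  finally show ?thesis
    by simp
qed

lemma exp_diff_mult_nonpos:
  fixes u d t :: real
  assumes "d * t \<ge> 0"
  shows "(exp u - exp (u + d)) * t \<le> 0"
proof (cases "d \<ge> 0")
  case True
  then show ?thesis
    using assms by (cases "d = 0") (auto simp: mult_nonpos_nonneg zero_le_mult_iff)
next
  case False
  then show ?thesis
    using assms by (auto simp: mult_nonneg_nonpos zero_le_mult_iff)
qed

lemma abs_exchange_mult_nonneg:
  fixes x y p q :: real
  assumes "p \<le> q"
  shows "(x - y) * (\<bar>x - p\<bar> + \<bar>y - q\<bar> - \<bar>y - p\<bar> - \<bar>x - q\<bar>) \<ge> 0"
proof (cases "x \<ge> y")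
  case True
  then have "\<bar>x - p\<bar> + \<bar>y - q\<bar> - \<bar>y - p\<bar> - \<bar>x - q\<bar> \<ge> 0"
    using assms by linarith
  then show ?thesis
    using True by simp
next
  case False
  then have "\<bar>x - p\<bar> + \<bar>y - q\<bar> - \<bar>y - p\<bar> - \<bar>x - q\<bar> \<le> 0"
    using assms by linarith
  then show ?thesis
    using False by (simp add: mult_nonpos_nonpos)
qed

lemma footrule_comp_transpose:
  assumes "a \<in> {1..n}" "b \<in> {1..n}"
  shows "footrule n (r \<circ> Transposition.transpose a b) \<rho> = footrule n r \<rho>
    - (\<bar>real (r a) - real (\<rho> a)\<bar> + \<bar>real (r b) - real (\<rho> b)\<bar>
       - \<bar>real (r b) - real (\<rho> a)\<bar> - \<bar>real (r a) - real (\<rho> b)\<bar>)"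
proof (cases "a = b")
  case False
  let ?d = "\<lambda>i. \<bar>real (r i) - real (\<rho> i)\<bar> - \<bar>real ((r \<circ> Transposition.transpose a b) i) - real (\<rho> i)\<bar>"
  have "footrule n r \<rho> - footrule n (r \<circ> Transposition.transpose a b) \<rho> = (\<Sum>i=1..n. ?d i)"
    unfolding footrule_def by (simp add: sum_subtractf)
  also have "\<dots> = (\<Sum>i\<in>{a,b}. ?d i)"
    using assms by (intro sum.mono_neutral_right) auto
  finally show ?thesis
    using False by simp
qed simp

definition mallows_weight :: "nat \<Rightarrow> (nat \<Rightarrow> nat) \<Rightarrow> real \<Rightarrow> (nat \<Rightarrow> nat) \<Rightarrow> real" where
  "mallows_weight n \<rho>0 \<alpha> r = exp (- (\<alpha> / real n) * footrule n r \<rho>0)"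

lemma finite_rankings: "finite (rankings n)"
  unfolding rankings_def by (rule finite_permutations) simp

lemma mallows_Z_eq: "mallows_Z n \<rho>0 \<alpha> = (\<Sum>r\<in>rankings n. mallows_weight n \<rho>0 \<alpha> r)"
  unfolding mallows_Z_def mallows_weight_def ..

lemma mallows_Z_pos: "mallows_Z n \<rho>0 \<alpha> > 0"
proof -
  have "id \<in> rankings n"
    unfolding rankings_def by (simp add: permutes_id)
  then show ?thesis
    unfolding mallows_Z_eq mallows_weight_def by (intro sum_pos finite_rankings) auto
qed

lemma pmf_mallows:
  "pmf (mallows n \<rho>0 \<alpha>) r =
    (if r \<in> rankings n then mallows_weight n \<rho>0 \<alpha> r / mallows_Z n \<rho>0 \<alpha> else 0)"
proof -
  let ?f = "\<lambda>r. if r \<in> rankings n then mallows_weight n \<rho>0 \<alpha> r / mallows_Z n \<rho>0 \<alpha> else 0"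
  have nonneg: "0 \<le> ?f r" for r
    using mallows_Z_pos[of n \<rho>0 \<alpha>] by (simp add: mallows_weight_def)
  have "(\<integral>\<^sup>+r. ennreal (?f r) \<partial>count_space UNIV) = (\<Sum>r\<in>rankings n. ennreal (?f r))"
    by (rule nn_integral_count_space') (auto simp: finite_rankings)
  also have "\<dots> = ennreal (\<Sum>r\<in>rankings n. ?f r)"
    by (rule sum_ennreal) (rule nonneg)
  also have "(\<Sum>r\<in>rankings n. ?f r) = 1"
    using mallows_Z_pos[of n \<rho>0 \<alpha>] by (simp add: mallows_Z_eq sum_divide_distrib[symmetric])
  finally have total: "(\<integral>\<^sup>+r. ennreal (?f r) \<partial>count_space UNIV) = 1"
    by simp
  have "mallows n \<rho>0 \<alpha> = embed_pmf ?f"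
    unfolding mallows_def mallows_weight_def ..
  then show ?thesis
    using pmf_embed_pmf[OF nonneg total] by simp
qed

lemma set_pmf_mallows: "set_pmf (mallows n \<rho>0 \<alpha>) \<subseteq> rankings n"
  by (auto simp: set_pmf_eq pmf_mallows)

lemma expectation_mallows:
  "measure_pmf.expectation (mallows n \<rho>0 \<alpha>) f =
    (\<Sum>r\<in>rankings n. mallows_weight n \<rho>0 \<alpha> r * f r) / mallows_Z n \<rho>0 \<alpha>"
proof -
  have "measure_pmf.expectation (mallows n \<rho>0 \<alpha>) f = (\<Sum>r\<in>rankings n. f r * pmf (mallows n \<rho>0 \<alpha>) r)"
    using set_pmf_mallows by (intro integral_measure_pmf_real finite_rankings) auto
  then show ?thesis
    by (simp add: pmf_mallows sum_divide_distrib mult.commute)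
qed

lemma sum_mallows_weight_rank_diff_neg:
  assumes \<rho>0: "\<rho>0 \<in> rankings n" and "\<alpha> > 0"
    and a: "a \<in> {1..n}" and b: "b \<in> {1..n}" and less: "\<rho>0 a < \<rho>0 b"
  shows "(\<Sum>r\<in>rankings n. mallows_weight n \<rho>0 \<alpha> r * (real (r a) - real (r b))) < 0"
proof -
  define \<sigma> :: "(nat \<Rightarrow> nat) \<Rightarrow> nat \<Rightarrow> nat" where "\<sigma> r = r \<circ> Transposition.transpose a b" for r
  define c where "c = \<alpha> / real n"
  define gain :: "(nat \<Rightarrow> nat) \<Rightarrow> real" where
    "gain r = \<bar>real (r a) - real (\<rho>0 a)\<bar> + \<bar>real (r b) - real (\<rho>0 b)\<bar>
       - \<bar>real (r b) - real (\<rho>0 a)\<bar> - \<bar>real (r a) - real (\<rho>0 b)\<bar>" for r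
  let ?g = "\<lambda>r. mallows_weight n \<rho>0 \<alpha> r * (real (r a) - real (r b))"
  have "c > 0"
    using \<open>\<alpha> > 0\<close> a unfolding c_def by auto
  have \<sigma>_in: "\<sigma> r \<in> rankings n" if "r \<in> rankings n" for r
    using that a b unfolding \<sigma>_def rankings_def mem_Collect_eq
    by (intro permutes_compose permutes_swap_id) auto
  have \<sigma>_\<sigma>: "\<sigma> (\<sigma> r) = r" for r
    unfolding \<sigma>_def by (simp add: comp_assoc)
  have \<sigma>_apply: "\<sigma> r a = r b" "\<sigma> r b = r a" for r
    unfolding \<sigma>_def by simp_all
  have weight: "mallows_weight n \<rho>0 \<alpha> r = exp (- c * footrule n r \<rho>0)" for r
    unfolding mallows_weight_def c_def by simp
  have weight_\<sigma>: "mallows_weight n \<rho>0 \<alpha> (\<sigma> r) = exp (- c * footrule n r \<rho>0 + c * gain r)" for r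
    unfolding weight \<sigma>_def footrule_comp_transpose[OF a b] gain_def by (simp add: algebra_simps)
  have pair: "?g r + ?g (\<sigma> r) = (exp (- c * footrule n r \<rho>0) - exp (- c * footrule n r \<rho>0 + c * gain r))
      * (real (r a) - real (r b))" for r
    unfolding weight_\<sigma> \<sigma>_apply by (simp add: weight algebra_simps)
  show ?thesis
  proof (rule sum_neg_by_involution[OF finite_rankings \<sigma>_in \<sigma>_\<sigma>])
    fix r
    have "(real (r a) - real (r b)) * gain r \<ge> 0"
      unfolding gain_def using less by (intro abs_exchange_mult_nonneg) simp
    then have "c * gain r * (real (r a) - real (r b)) \<ge> 0"
      using \<open>c > 0\<close> by (metis mult.assoc mult.commute mult_nonneg_nonneg less_imp_le)
    then show "?g r + ?g (\<sigma> r) \<le> 0"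
      unfolding pair by (rule exp_diff_mult_nonpos)
  next
    show "\<sigma> \<rho>0 \<in> rankings n"
      using \<rho>0 by (rule \<sigma>_in)
    have "gain (\<sigma> \<rho>0) > 0" "real (\<sigma> \<rho>0 a) - real (\<sigma> \<rho>0 b) > 0"
      unfolding gain_def \<sigma>_apply using less by simp_all
    then show "?g (\<sigma> \<rho>0) + ?g (\<sigma> (\<sigma> \<rho>0)) < 0"
      unfolding pair using \<open>c > 0\<close> by (simp add: mult_neg_pos)
  qed
qed

lemma mallows_expectation_less:
  assumes "\<rho>0 \<in> rankings n" and "\<alpha> > 0"
    and "a \<in> {1..n}" and "b \<in> {1..n}" and "\<rho>0 a < \<rho>0 b"
  shows "measure_pmf.expectation (mallows n \<rho>0 \<alpha>) (\<lambda>r. real (r a))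
       < measure_pmf.expectation (mallows n \<rho>0 \<alpha>) (\<lambda>r. real (r b))"
proof -
  have "measure_pmf.expectation (mallows n \<rho>0 \<alpha>) (\<lambda>r. real (r a))
      - measure_pmf.expectation (mallows n \<rho>0 \<alpha>) (\<lambda>r. real (r b))
    = (\<Sum>r\<in>rankings n. mallows_weight n \<rho>0 \<alpha> r * (real (r a) - real (r b))) / mallows_Z n \<rho>0 \<alpha>"
    by (simp add: expectation_mallows diff_divide_distrib sum_subtractf right_diff_distrib)
  also have "\<dots> < 0"
    using sum_mallows_weight_rank_diff_neg[OF assms] mallows_Z_pos by (rule divide_neg_pos)
  finally show ?thesis
    by simp
qed

lemma rank_vec_mallows_expectation:
  assumes "\<rho>0 \<in> rankings n" and "\<alpha> > 0" and "i \<in> {1..n}"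
  shows "rank_vec n (\<lambda>k. measure_pmf.expectation (mallows n \<rho>0 \<alpha>) (\<lambda>r. real (r k))) i = \<rho>0 i"
proof (rule rank_vec_eq_permutation)
  show "\<rho>0 permutes {1..n}"
    using assms(1) unfolding rankings_def by simp
qed (use mallows_expectation_less[OF assms(1,2)] assms(3) in auto)

lemma inj_on_mallows_expectation:
  assumes "\<rho>0 \<in> rankings n" and "\<alpha> > 0"
  shows "inj_on (\<lambda>k. measure_pmf.expectation (mallows n \<rho>0 \<alpha>) (\<lambda>r. real (r k))) {1..n}"
proof (rule inj_onI)
  let ?E = "\<lambda>k. measure_pmf.expectation (mallows n \<rho>0 \<alpha>) (\<lambda>r. real (r k))"
  fix i j
  assume i: "i \<in> {1..n}" and j: "j \<in> {1..n}" and "?E i = ?E j"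
  then have "rank_vec n ?E i = rank_vec n ?E j"
    unfolding rank_vec_def by simp
  then have "\<rho>0 i = \<rho>0 j"
    by (simp only: rank_vec_mallows_expectation[OF assms i] rank_vec_mallows_expectation[OF assms j])
  moreover have "inj_on \<rho>0 {1..n}"
    using assms(1) unfolding rankings_def by (simp add: permutes_inj_on)
  ultimately show "i = j"
    using i j by (auto dest: inj_onD)
qed

lemma (in prob_space) AE_mallows_sample_mean_tendsto:
  assumes "indep_vars (\<lambda>_. count_space UNIV) R UNIV"
    and "\<And>j. distr M (count_space UNIV) (R j) = measure_pmf (mallows n \<rho>0 \<alpha>)"
    and "k \<in> {1..n}"
  shows "AE \<omega> in M. (\<lambda>N. (\<Sum>j=1..N. real (R j \<omega> k)) / real N)
    \<longlonglongrightarrow> measure_pmf.expectation (mallows n \<rho>0 \<alpha>) (\<lambda>r. real (r k))"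
  using assms(1,2)
proof (rule AE_sample_mean_tendsto_expectation_pmf)
  fix r
  assume "r \<in> set_pmf (mallows n \<rho>0 \<alpha>)"
  then have "r permutes {1..n}"
    using set_pmf_mallows unfolding rankings_def by blast
  then show "real (r k) \<in> {1..real n}"
    using permutes_in_image[of r "{1..n}" k] assms(3) by auto
qed

theorem theorem2:
  fixes M :: "'a measure" and n :: nat and \<rho>0 :: "nat \<Rightarrow> nat" and \<alpha> :: real
    and R :: "nat \<Rightarrow> 'a \<Rightarrow> (nat \<Rightarrow> nat)"
  assumes "prob_space M"
    and "n \<ge> 2"
    and "\<rho>0 \<in> rankings n"
    and "\<alpha> > 0"
    and "\<And>j. R j \<in> M \<rightarrow>\<^sub>M count_space UNIV"
    and "prob_space.indep_vars M (\<lambda>_. count_space UNIV) R UNIV"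
    and "\<And>j. distr M (count_space UNIV) (R j) = measure_pmf (mallows n \<rho>0 \<alpha>)"
  shows "(\<forall>i\<in>{1..n}. rank_vec n (\<lambda>k. measure_pmf.expectation (mallows n \<rho>0 \<alpha>) (\<lambda>r. real (r k))) i = \<rho>0 i)
       \<and> (AE \<omega> in M. eventually (\<lambda>N.
            \<forall>i\<in>{1..n}. rank_vec n (\<lambda>i. (1 / real N) * (\<Sum>j=1..N. real (R j \<omega> i))) i
              = rank_vec n (\<lambda>i. measure_pmf.expectation (mallows n \<rho>0 \<alpha>) (\<lambda>r. real (r i))) i)
          sequentially)"
proof -
  interpret prob_space M
    by fact
  define E where "E k = measure_pmf.expectation (mallows n \<rho>0 \<alpha>) (\<lambda>r. real (r k))" for k
  have "AE \<omega> in M. \<forall>k\<in>{1..n}. (\<lambda>N. (\<Sum>j=1..N. real (R j \<omega> k)) / real N) \<longlonglongrightarrow> E k"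
    unfolding E_def by (intro AE_finite_allI AE_mallows_sample_mean_tendsto[OF assms(6,7)]) simp_all
  then have "AE \<omega> in M. eventually (\<lambda>N. \<forall>i\<in>{1..n}.
      rank_vec n (\<lambda>i. (1 / real N) * (\<Sum>j=1..N. real (R j \<omega> i))) i = rank_vec n E i) sequentially"
  proof (rule eventually_mono)
    fix \<omega>
    assume "\<forall>k\<in>{1..n}. (\<lambda>N. (\<Sum>j=1..N. real (R j \<omega> k)) / real N) \<longlonglongrightarrow> E k"
    then show "eventually (\<lambda>N. \<forall>i\<in>{1..n}.
        rank_vec n (\<lambda>i. (1 / real N) * (\<Sum>j=1..N. real (R j \<omega> i))) i = rank_vec n E i) sequentially"
      using inj_on_mallows_expectation[OF assms(3,4)] unfolding E_def[abs_def]
      by (intro eventually_rank_vec_eq) simp_all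
  qed
  then show ?thesis
    using rank_vec_mallows_expectation[OF assms(3,4)] unfolding E_def by blast
qed

end
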